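(* For every configuration $\gamma_0$ one can (constructively) define: (a) a set of configurations $B(\gamma_0)$ with $\gamma_0\in B(\gamma_0)$, closed under $\mathrm{Step}^{(d)}$ and $\mathrm{Step}^{(p)}$ (if $\gamma\in B(\gamma_0)$ and $\gamma\to\gamma'$ is a d-step or a par-step then $\gamma'\in B(\gamma_0)$); (b) a set $D(\gamma_0)$ and a function $\Phi_{\gamma_0}:\Gamma\to D(\gamma_0)$ that does not depend on the $par$-variables (if $\gamma,\gamma'$ have the same $d$-values at all nodes then $\Phi_{\gamma_0}(\gamma)=\Phi_{\gamma_0}(\gamma')$); (c) a well-founded strict order $\prec_d$ on $D(\gamma_0)$, such that for all configurations $\gamma\in B(\gamma_0)$ and $\gamma'$ with $\gamma\xrightarrow{\mathrm{Step}^{(d)}}\gamma'$ we have $\Phi_{\gamma_0}(\gamma')\prec_d\Phi_{\gamma_0}(\gamma)$.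
   Context: Let $G$ be a finite, connected, undirected graph with node set $V$ and a distinguished node $r$ (the root). Each node $p$ has a fixed ordered list $N(p)$ of its neighbours. A configuration $\gamma$ assigns to each node $p$ a value $\gamma.p.d\in\mathbb N$ and a neighbour $\gamma.p.par\in N(p)$; $\Gamma$ denotes the set of configurations. For a non-root node $p$ let $Dist_p(\gamma)=\min\{\gamma.q.d+1 : q\in N(p)\}$. Algorithm BFS (Dolev et al.) has the following actions. Root: enabled iff $\gamma.r.d\neq 0$; executing it sets $r.d:=0$. Non-root $p$, action CD: enabled iff $\gamma.p.d\ne Dist_p(\gamma)$; executing sets $p.d:=Dist_p(\gamma)$. Non-root $p$, action CP: enabled iff $\gamma.p.d=Dist_p(\gamma)$ and $\gamma.q_0.d+1\neq\gamma.p.d$ where $q_0=\gamma.p.par$; executing sets $p.par$ to the first $q$ in $N(p)$ with $\gamma.q.d+1=\gamma.p.d$. A node is enabled if one of its actions is enabled. A step $\gamma\to\gamma'$ (unfair daemon) holds iff there is a nonempty set $S$ of nodes enabled in $\gamma$ such that $\gamma'$ is obtained by every $p\in S$ simultaneously executing its enabled action (evaluated in $\gamma$), all other nodes unchanged. $\mathrm{Step}^{(d)}$: steps with $\gamma.r.d=\gamma'.r.d$ and $\gamma.p.d\ne\gamma'.p.d$ for some node $p$. $\mathrm{Step}^{(p)}$: steps with $\gamma.p.d=\gamma'.p.d$ for all $p$. A strict order is well-founded if it has no infinite descending chain. *)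

theory Defs
  imports Main
begin

text \<open>Nodes form a finite type 'v (so V = UNIV). N p is the ordered neighbour list of p.\<close>

record 'v config =
  d   :: "'v \<Rightarrow> nat"
  par :: "'v \<Rightarrow> 'v"

definition bfs_graph :: "('v::finite \<Rightarrow> 'v list) \<Rightarrow> 'v \<Rightarrow> bool" where
  "bfs_graph N r \<longleftrightarrow>
     (\<forall>p. distinct (N p)) \<and>
     (\<forall>p. p \<notin> set (N p)) \<and>
     (\<forall>p q. q \<in> set (N p) \<longleftrightarrow> p \<in> set (N q)) \<and>
     (\<forall>p. (r, p) \<in> {(a, b). b \<in> set (N a)}\<^sup>*)"

definition Configs :: "('v \<Rightarrow> 'v list) \<Rightarrow> 'v config set" where
  "Configs N = {\<gamma>. \<forall>p. par \<gamma> p \<in> set (N p)}"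

definition Dist :: "('v \<Rightarrow> 'v list) \<Rightarrow> 'v config \<Rightarrow> 'v \<Rightarrow> nat" where
  "Dist N \<gamma> p = Min ((\<lambda>q. d \<gamma> q + 1) ` set (N p))"

definition CD_enabled :: "('v \<Rightarrow> 'v list) \<Rightarrow> 'v \<Rightarrow> 'v config \<Rightarrow> 'v \<Rightarrow> bool" where
  "CD_enabled N r \<gamma> p \<longleftrightarrow> p \<noteq> r \<and> d \<gamma> p \<noteq> Dist N \<gamma> p"

definition CP_enabled :: "('v \<Rightarrow> 'v list) \<Rightarrow> 'v \<Rightarrow> 'v config \<Rightarrow> 'v \<Rightarrow> bool" where
  "CP_enabled N r \<gamma> p \<longleftrightarrow> p \<noteq> r \<and> d \<gamma> p = Dist N \<gamma> p \<and>
     d \<gamma> (par \<gamma> p) + 1 \<noteq> d \<gamma> p"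

definition root_enabled :: "'v \<Rightarrow> 'v config \<Rightarrow> 'v \<Rightarrow> bool" where
  "root_enabled r \<gamma> p \<longleftrightarrow> p = r \<and> d \<gamma> r \<noteq> 0"

definition enabled :: "('v \<Rightarrow> 'v list) \<Rightarrow> 'v \<Rightarrow> 'v config \<Rightarrow> 'v \<Rightarrow> bool" where
  "enabled N r \<gamma> p \<longleftrightarrow> root_enabled r \<gamma> p \<or> CD_enabled N r \<gamma> p \<or> CP_enabled N r \<gamma> p"

definition new_d :: "('v \<Rightarrow> 'v list) \<Rightarrow> 'v \<Rightarrow> 'v config \<Rightarrow> 'v \<Rightarrow> nat" where
  "new_d N r \<gamma> p =
     (if p = r then 0 else if CD_enabled N r \<gamma> p then Dist N \<gamma> p else d \<gamma> p)"

definition new_par :: "('v \<Rightarrow> 'v list) \<Rightarrow> 'v \<Rightarrow> 'v config \<Rightarrow> 'v \<Rightarrow> 'v" where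
  "new_par N r \<gamma> p =
     (if CP_enabled N r \<gamma> p then hd (filter (\<lambda>q. d \<gamma> q + 1 = d \<gamma> p) (N p))
      else par \<gamma> p)"

text \<open>A step under the unfair (distributed) daemon.\<close>
definition step :: "('v \<Rightarrow> 'v list) \<Rightarrow> 'v \<Rightarrow> 'v config \<Rightarrow> 'v config \<Rightarrow> bool" where
  "step N r \<gamma> \<gamma>' \<longleftrightarrow> \<gamma> \<in> Configs N \<and>
     (\<exists>S. S \<noteq> {} \<and> (\<forall>p\<in>S. enabled N r \<gamma> p) \<and>
        \<gamma>' = \<lparr>d = (\<lambda>p. if p \<in> S then new_d N r \<gamma> p else d \<gamma> p),
              par = (\<lambda>p. if p \<in> S then new_par N r \<gamma> p else par \<gamma> p)\<rparr>)"

definition step_d :: "('v \<Rightarrow> 'v list) \<Rightarrow> 'v \<Rightarrow> 'v config \<Rightarrow> 'v config \<Rightarrow> bool" where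
  "step_d N r \<gamma> \<gamma>' \<longleftrightarrow> step N r \<gamma> \<gamma>' \<and> d \<gamma> r = d \<gamma>' r \<and> (\<exists>p. d \<gamma> p \<noteq> d \<gamma>' p)"

definition step_p :: "('v \<Rightarrow> 'v list) \<Rightarrow> 'v \<Rightarrow> 'v config \<Rightarrow> 'v config \<Rightarrow> bool" where
  "step_p N r \<gamma> \<gamma>' \<longleftrightarrow> step N r \<gamma> \<gamma>' \<and> (\<forall>p. d \<gamma> p = d \<gamma>' p)"

end

theory Submission imports Defs "HOL-Library.FuncSet" begin

text \<open>Steps of kind d and p keep the root's value, and a node that changes takes a value
  Dist p \<le> d q + 1 for a neighbour q closer to the root. Hence every d p stays below M + h p,
  where M bounds the initial d-values and h is the BFS height from the root, so only finitely
  many d-vectors occur. The d-updates admit no cycle, so the transitive closure of the reversed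
  update relation on these finitely many vectors is a well-founded strict order, and the
  d-vector itself (truncated at the bound, to be defined everywhere) descends along every
  d-step.\<close>

definition Dist_of :: "('v \<Rightarrow> 'v list) \<Rightarrow> ('v \<Rightarrow> nat) \<Rightarrow> 'v \<Rightarrow> nat" where
  "Dist_of N f p = Min ((\<lambda>q. f q + 1) ` set (N p))"

text \<open>The d-part of a Step^(d), forgetting par and the root.\<close>
definition dist_update :: "('v \<Rightarrow> 'v list) \<Rightarrow> ('v \<Rightarrow> nat) \<Rightarrow> ('v \<Rightarrow> nat) \<Rightarrow> bool" where
  "dist_update N f g \<longleftrightarrow>
     f \<noteq> g \<and> (\<forall>p. g p \<noteq> f p \<longrightarrow> set (N p) \<noteq> {} \<and> g p = Dist_of N f p)"

lemma last_change_before: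
  fixes s :: "nat \<Rightarrow> 'a"
  assumes "i0 < t" and "s (Suc i0) \<noteq> s i0"
  shows "\<exists>i<t. s (Suc i) \<noteq> s i \<and> s (Suc i) = s t"
  using assms
proof (induction t)
  case (Suc t)
  show ?case
  proof (cases "s (Suc t) = s t")
    case True
    with Suc.prems have "i0 < t" by (metis less_SucE)
    with Suc.IH Suc.prems True show ?thesis by (metis less_SucI)
  qed blast
qed simp

lemma periodic_change_recurs:
  fixes s :: "nat \<Rightarrow> 'a"
  assumes periodic: "\<And>i. s (i + n) = s i" and "n > 0" and "s (Suc i0) \<noteq> s i0"
  shows "\<exists>i. s (Suc i) \<noteq> s i \<and> s (Suc i) = s t"
proof -
  have multiple: "s (t + k * n) = s t" for k
  proof (induction k)
    case (Suc k)
    have "s (t + Suc k * n) = s (t + k * n + n)" by (simp add: algebra_simps)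
    with Suc show ?case by (simp only: periodic)
  qed simp
  have "i0 \<le> i0 * n" using \<open>n > 0\<close> by simp
  then have "i0 < t + Suc i0 * n" using \<open>n > 0\<close> by (simp only: mult_Suc)
  from last_change_before[OF this \<open>s (Suc i0) \<noteq> s i0\<close>] multiple show ?thesis by metis
qed

text \<open>Let m be the least value ever written in a periodic chain, written at p using a
  neighbour q with value m - 1. If q ever changed, its value m - 1 would be rewritten later,
  contradicting minimality; so q is constant and every change of p writes exactly m. But
  the value p held before writing m is itself rewritten later, so it was m already.\<close>
lemma no_periodic_dist_update_chain:
  fixes s :: "nat \<Rightarrow> 'v \<Rightarrow> nat"
  assumes periodic: "\<And>i. s (i + n) = s i" and "n > 0"
    and chain: "\<And>i. dist_update N (s i) (s (Suc i))"
  shows False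
proof -
  define writes where "writes p v \<longleftrightarrow> (\<exists>i. s (Suc i) p \<noteq> s i p \<and> s (Suc i) p = v)" for p v
  have recurs: "writes p (s t p)" if "s (Suc i0) p \<noteq> s i0 p" for i0 t p
  proof -
    have "\<exists>i. s (Suc i) p \<noteq> s i p \<and> s (Suc i) p = s t p"
      by (rule periodic_change_recurs[of "\<lambda>i. s i p" n i0]) (simp_all add: periodic \<open>n > 0\<close> that)
    then show ?thesis unfolding writes_def .
  qed
  from chain[of 0] have "s 0 \<noteq> s (Suc 0)" unfolding dist_update_def by blast
  then obtain p0 where "s (Suc 0) p0 \<noteq> s 0 p0" by (metis ext)
  then have "writes p0 (s (Suc 0) p0)" unfolding writes_def by blast
  define m where "m = (LEAST v. \<exists>p. writes p v)"
  have minimal: "m \<le> v" if "writes p v" for p v unfolding m_def using that by (blast intro: Least_le)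
  have "\<exists>p. writes p m" unfolding m_def by (rule LeastI_ex) (use \<open>writes p0 _\<close> in blast)
  then obtain j p where changed: "s (Suc j) p \<noteq> s j p" and m: "m = s (Suc j) p"
    unfolding writes_def by blast
  with chain have "set (N p) \<noteq> {}" and "m = Dist_of N (s j) p" unfolding dist_update_def by auto
  moreover have "Dist_of N (s j) p \<in> (\<lambda>q. s j q + 1) ` set (N p)"
    unfolding Dist_of_def using \<open>set (N p) \<noteq> {}\<close> by (intro Min_in) auto
  ultimately obtain q where q: "q \<in> set (N p)" and qm: "s j q + 1 = m" by auto
  have q_steady: "s (Suc i) q = s i q" for i
  proof (rule ccontr)
    assume "s (Suc i) q \<noteq> s i q"
    then have "m \<le> s j q" by (intro minimal[of q] recurs)
    with qm show False by simp
  qed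
  have q_const: "s i q = s 0 q" for i by (induction i) (simp_all add: q_steady)
  have p_writes_m: "v = m" if "writes p v" for v
  proof -
    from that obtain i where "s (Suc i) p \<noteq> s i p" and v: "v = s (Suc i) p"
      unfolding writes_def by blast
    with chain[of i] have "v = Dist_of N (s i) p" unfolding dist_update_def by auto
    also have "\<dots> \<le> s i q + 1" unfolding Dist_of_def using q by simp
    finally have "v \<le> m" using q_const[of i] q_const[of j] qm by simp
    with minimal[OF that] show "v = m" by simp
  qed
  from recurs[OF changed, of j] have "s j p = m" by (rule p_writes_m)
  with changed m show False by simp
qed

lemma acyclic_dist_update: "acyclic {(f, g). dist_update N f g}"
proof (rule acyclicI, intro allI notI)
  fix x assume "(x, x) \<in> {(f, g). dist_update N f g}\<^sup>+"
  then obtain n where "n > 0" and "(x, x) \<in> {(f, g). dist_update N f g} ^^ n"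
    by (auto simp: trancl_power)
  then obtain f where f: "f 0 = x" "f n = x" "\<forall>i<n. dist_update N (f i) (f (Suc i))"
    by (auto simp: relpow_fun_conv)
  have "dist_update N (f (i mod n)) (f (Suc i mod n))" for i
    using f \<open>n > 0\<close> by (metis mod_Suc mod_less_divisor)
  then show False
    using no_periodic_dist_update_chain[of "\<lambda>i. f (i mod n)" n N] \<open>n > 0\<close> by simp
qed

lemma exists_descending_height:
  assumes "bfs_graph N r"
  obtains h :: "'v::finite \<Rightarrow> nat" where "\<And>p. p \<noteq> r \<Longrightarrow> \<exists>q\<in>set (N p). h q < h p"
proof
  define E where "E = {(a, b). b \<in> set (N a)}"
  define h where "h p = (LEAST n. (r, p) \<in> E ^^ n)" for p
  have sym: "q \<in> set (N p) \<longleftrightarrow> p \<in> set (N q)" for p q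
    using assms unfolding bfs_graph_def by blast
  have path: "(r, p) \<in> E ^^ h p" for p
  proof -
    from assms have "(r, p) \<in> E\<^sup>*" unfolding bfs_graph_def E_def by blast
    then obtain n where "(r, p) \<in> E ^^ n" using rtrancl_power by blast
    then show ?thesis unfolding h_def by (rule LeastI)
  qed
  fix p :: 'v assume "p \<noteq> r"
  with path[of p] obtain k where k: "h p = Suc k" by (cases "h p") auto
  with path[of p] obtain q where "(r, q) \<in> E ^^ k" and "(q, p) \<in> E" by (auto elim: relpow_Suc_E)
  then have "h q \<le> k" and "q \<in> set (N p)" using sym unfolding h_def E_def by (auto intro: Least_le)
  with k show "\<exists>q\<in>set (N p). h q < h p" by force
qed

lemma step_Configs:
  assumes "step N r \<gamma> \<gamma>'"
  shows "\<gamma>' \<in> Configs N"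
  unfolding Configs_def
proof (intro CollectI allI)
  fix p
  from assms obtain S where "\<gamma> \<in> Configs N" and
    \<gamma>': "\<gamma>' = \<lparr>d = (\<lambda>p. if p \<in> S then new_d N r \<gamma> p else d \<gamma> p),
              par = (\<lambda>p. if p \<in> S then new_par N r \<gamma> p else par \<gamma> p)\<rparr>"
    unfolding step_def by blast
  then have old: "par \<gamma> p \<in> set (N p)" unfolding Configs_def by blast
  show "par \<gamma>' p \<in> set (N p)"
  proof (cases "p \<in> S \<and> CP_enabled N r \<gamma> p")
    case True
    let ?pred = "\<lambda>q. d \<gamma> q + 1 = d \<gamma> p"
    from True have "d \<gamma> p = Dist N \<gamma> p" unfolding CP_enabled_def by blast
    moreover have "Dist N \<gamma> p \<in> (\<lambda>q. d \<gamma> q + 1) ` set (N p)"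
      unfolding Dist_def using old by (intro Min_in) auto
    ultimately have "filter ?pred (N p) \<noteq> []" by (auto simp: filter_empty_conv)
    then have "hd (filter ?pred (N p)) \<in> set (N p)" using hd_in_set by fastforce
    then show ?thesis using True \<gamma>' unfolding new_par_def by simp
  qed (use \<gamma>' old in \<open>auto simp: new_par_def\<close>)
qed

lemma step_preserves_height_bound:
  assumes descent: "\<And>p. p \<noteq> r \<Longrightarrow> \<exists>q\<in>set (N p). h q < h p"
    and bound: "\<And>p. d \<gamma> p \<le> M + h p"
    and "step N r \<gamma> \<gamma>'" and root: "d \<gamma>' r = d \<gamma> r"
  shows "d \<gamma>' p \<le> M + h p"
proof (cases "p = r")
  case False
  from assms(3) obtain S where
    "\<gamma>' = \<lparr>d = (\<lambda>p. if p \<in> S then new_d N r \<gamma> p else d \<gamma> p),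
           par = (\<lambda>p. if p \<in> S then new_par N r \<gamma> p else par \<gamma> p)\<rparr>"
    unfolding step_def by blast
  then have "d \<gamma>' p \<in> {d \<gamma> p, Dist N \<gamma> p}" using False by (auto simp: new_d_def)
  moreover from descent[OF False] obtain q where "q \<in> set (N p)" and "h q < h p" by blast
  then have "Dist N \<gamma> p \<le> d \<gamma> q + 1" unfolding Dist_def by (intro Min_le) auto
  with \<open>h q < h p\<close> have "Dist N \<gamma> p \<le> M + h p" using bound[of q] by linarith
  ultimately show ?thesis using bound[of p] by auto
qed (use root bound in simp)

lemma step_d_dist_update:
  assumes "step_d N r \<gamma> \<gamma>'"
  shows "dist_update N (d \<gamma>) (d \<gamma>')"
proof -
  from assms obtain S where "\<gamma> \<in> Configs N" and
    \<gamma>': "\<gamma>' = \<lparr>d = (\<lambda>p. if p \<in> S then new_d N r \<gamma> p else d \<gamma> p),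
              par = (\<lambda>p. if p \<in> S then new_par N r \<gamma> p else par \<gamma> p)\<rparr>"
    and root: "d \<gamma> r = d \<gamma>' r" and changed: "\<exists>p. d \<gamma> p \<noteq> d \<gamma>' p"
    unfolding step_d_def step_def by blast
  have "set (N p) \<noteq> {} \<and> d \<gamma>' p = Dist_of N (d \<gamma>) p" if "d \<gamma>' p \<noteq> d \<gamma> p" for p
  proof
    show "set (N p) \<noteq> {}" using \<open>\<gamma> \<in> Configs N\<close> unfolding Configs_def by (metis empty_iff mem_Collect_eq)
    show "d \<gamma>' p = Dist_of N (d \<gamma>) p"
      using that root \<gamma>' by (auto simp: new_d_def CD_enabled_def Dist_def Dist_of_def split: if_splits)
  qed
  with changed show ?thesis unfolding dist_update_def by metis
qed

definition bounded_funs :: "nat \<Rightarrow> ('v \<Rightarrow> nat) set" where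
  "bounded_funs K = {f. \<forall>p. f p \<le> K}"

lemma finite_bounded_funs: "finite (bounded_funs K :: ('v::finite \<Rightarrow> nat) set)"
proof -
  have "bounded_funs K = (Pi\<^sub>E UNIV (\<lambda>_. {..K}) :: ('v \<Rightarrow> nat) set)"
    by (auto simp: bounded_funs_def PiE_def Pi_def extensional_def)
  then show ?thesis by (simp add: finite_PiE)
qed

definition dist_descent :: "('v \<Rightarrow> 'v list) \<Rightarrow> ('v \<Rightarrow> nat) set \<Rightarrow> (('v \<Rightarrow> nat) \<times> ('v \<Rightarrow> nat)) set" where
  "dist_descent N D = {(g, f). f \<in> D \<and> g \<in> D \<and> dist_update N f g}"

lemma wf_trancl_dist_descent:
  assumes "finite D"
  shows "wf ((dist_descent N D)\<^sup>+)"
proof (rule wf_trancl, rule finite_acyclic_wf)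
  show "finite (dist_descent N D)"
    by (rule finite_subset[of _ "D \<times> D"]) (auto simp: dist_descent_def assms)
  have "dist_descent N D \<subseteq> {(f, g). dist_update N f g}\<inverse>" unfolding dist_descent_def by blast
  then show "acyclic (dist_descent N D)"
    using acyclic_dist_update[of N] by (auto intro: acyclic_subset)
qed

definition height_bounded :: "('v \<Rightarrow> 'v list) \<Rightarrow> ('v \<Rightarrow> nat) \<Rightarrow> nat \<Rightarrow> 'v config set" where
  "height_bounded N h M = {\<gamma> \<in> Configs N. \<forall>p. d \<gamma> p \<le> M + h p}"

lemma height_bounded_closed:
  assumes descent: "\<And>p. p \<noteq> r \<Longrightarrow> \<exists>q\<in>set (N p). h q < h p"
    and "\<gamma> \<in> height_bounded N h M" and "step_d N r \<gamma> \<gamma>' \<or> step_p N r \<gamma> \<gamma>'"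
  shows "\<gamma>' \<in> height_bounded N h M"
proof -
  from assms(3) have step: "step N r \<gamma> \<gamma>'" and root: "d \<gamma>' r = d \<gamma> r"
    unfolding step_d_def step_p_def by auto
  from assms(2) have bound: "d \<gamma> p \<le> M + h p" for p unfolding height_bounded_def by blast
  show ?thesis
    using step_Configs[OF step] step_preserves_height_bound[OF descent bound step root]
    unfolding height_bounded_def by blast
qed

definition potential :: "nat \<Rightarrow> 'v config \<Rightarrow> 'v \<Rightarrow> nat" where
  "potential K \<gamma> = (\<lambda>p. min (d \<gamma> p) K)"

lemma potential_in_bounded_funs: "potential K \<gamma> \<in> bounded_funs K"
  unfolding potential_def bounded_funs_def by simp

lemma potential_height_bounded:
  fixes h :: "'v::finite \<Rightarrow> nat"
  assumes "\<gamma> \<in> height_bounded N h M"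
  shows "potential (M + Max (range h)) \<gamma> = d \<gamma>"
proof
  fix p
  have "h p \<le> Max (range h)" by simp
  moreover have "d \<gamma> p \<le> M + h p" using assms unfolding height_bounded_def by blast
  ultimately have "d \<gamma> p \<le> M + Max (range h)" by linarith
  then show "potential (M + Max (range h)) \<gamma> p = d \<gamma> p" unfolding potential_def by simp
qed

lemma potential_step_d_descent:
  fixes h :: "'v::finite \<Rightarrow> nat"
  assumes descent: "\<And>p. p \<noteq> r \<Longrightarrow> \<exists>q\<in>set (N p). h q < h p"
    and "\<gamma> \<in> height_bounded N h M" and "step_d N r \<gamma> \<gamma>'"
  defines "K \<equiv> M + Max (range h)"
  shows "(potential K \<gamma>', potential K \<gamma>) \<in> dist_descent N (bounded_funs K)"
proof -
  have "\<gamma>' \<in> height_bounded N h M" using height_bounded_closed[OF descent assms(2)] assms(3) by blast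
  then show ?thesis
    using potential_in_bounded_funs[of K \<gamma>] potential_in_bounded_funs[of K \<gamma>']
      potential_height_bounded[OF assms(2)] potential_height_bounded[of \<gamma>']
      step_d_dist_update[OF assms(3)]
    unfolding dist_descent_def K_def by simp
qed

theorem proposition2:
  fixes N :: "'v::finite \<Rightarrow> 'v list" and r :: 'v
  assumes "bfs_graph N r"
  shows "\<forall>\<gamma>0 \<in> Configs N. \<exists>(B :: 'v config set) (D :: ('v \<Rightarrow> nat) set)
            (\<Phi> :: 'v config \<Rightarrow> ('v \<Rightarrow> nat)) (less :: ('v \<Rightarrow> nat) \<Rightarrow> ('v \<Rightarrow> nat) \<Rightarrow> bool).
     \<gamma>0 \<in> B \<and> B \<subseteq> Configs N \<and>
     (\<forall>\<gamma> \<gamma>'. \<gamma> \<in> B \<and> (step_d N r \<gamma> \<gamma>' \<or> step_p N r \<gamma> \<gamma>') \<longrightarrow> \<gamma>' \<in> B) \<and>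
     (\<forall>\<gamma> \<in> Configs N. \<Phi> \<gamma> \<in> D) \<and>
     (\<forall>\<gamma> \<in> Configs N. \<forall>\<gamma>' \<in> Configs N. d \<gamma> = d \<gamma>' \<longrightarrow> \<Phi> \<gamma> = \<Phi> \<gamma>') \<and>
     (\<forall>x \<in> D. \<not> less x x) \<and>
     (\<forall>x \<in> D. \<forall>y \<in> D. \<forall>z \<in> D. less x y \<and> less y z \<longrightarrow> less x z) \<and>
     wf {(x, y). x \<in> D \<and> y \<in> D \<and> less x y} \<and>
     (\<forall>\<gamma> \<in> B. \<forall>\<gamma>'. step_d N r \<gamma> \<gamma>' \<longrightarrow> less (\<Phi> \<gamma>') (\<Phi> \<gamma>))"
  apply (intro ballI)
  subgoal premises \<gamma>0_config for \<gamma>0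
  proof -
    obtain h :: "'v \<Rightarrow> nat" where descent: "\<And>p. p \<noteq> r \<Longrightarrow> \<exists>q\<in>set (N p). h q < h p"
      using exists_descending_height[OF assms] by blast
    define M where "M = Max (range (d \<gamma>0))"
    define K where "K = M + Max (range h)"
    let ?less = "\<lambda>x y. (x, y) \<in> (dist_descent N (bounded_funs K))\<^sup>+"
    have \<gamma>0_bounded: "\<gamma>0 \<in> height_bounded N h M"
      using \<gamma>0_config unfolding height_bounded_def M_def by (simp add: trans_le_add1)
    have wf_less: "wf ((dist_descent N (bounded_funs K))\<^sup>+)"
      by (rule wf_trancl_dist_descent[OF finite_bounded_funs])
    show ?thesis
      apply (intro exI[of _ "height_bounded N h M"] exI[of _ "bounded_funs K"]
          exI[of _ "potential K"] exI[of _ ?less] conjI)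
              apply (fact \<gamma>0_bounded)
      subgoal unfolding height_bounded_def by blast
      subgoal using height_bounded_closed[OF descent] by blast
      subgoal by (simp add: potential_in_bounded_funs)
      subgoal unfolding potential_def by simp
      subgoal using wf_less by simp
      subgoal by (meson trancl_trans)
      subgoal using wf_less by (rule wf_subset) auto
      subgoal using potential_step_d_descent[OF descent] unfolding K_def by blast
      done
  qed
  done

end
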